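(* Let $M(k,l,m,n)=\langle x,y \mid y^m=x^l,\ x^n=1,\ y^{-1}xy=x^k\rangle$ be a metacyclic group, where $\gcd(n,k)=1$, $k^m\equiv 1 \pmod n$ and $l(k-1)\equiv 0\pmod n$. Let $I$ be a set of integers containing exactly one representative of each orbit of the action of the cyclic group $K=\langle y\rangle$ on $\mathbb{Z}/n$ given by $y\cdot u = ku$. For $a\in I$ let $Ka=\{ak^i \bmod n : i\ge 0\}$ be its orbit and $r_a=|Ka|$. For $a,b,c\in I$ put $$S(a,b,c)=\big|\{(r,s)\in Ka\times Kb : r+s\equiv c \pmod n\}\big|,$$ and for $a\in I$ and an integer $\alpha$ put $$e_{a,\alpha}=\frac{n}{\gcd(n,l)}\Big(\alpha+\Big\{\frac{al}{n}\Big\}\Big),$$ where $\{t\}$ denotes the fractional part of $t$ (this is an integer). Let $a,b,c\in I$ with $S(a,b,c)\neq 0$, and let $0\le \alpha<r_c$, $0\le\beta<r_b$, $0\le \gamma<r_c$. Then $$e_{a,\alpha}+e_{b,\beta}-e_{c,\gamma}\equiv 0 \pmod{\frac{n}{\gcd(n,l)}}.$$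
   Context: Here $\gcd(n,0)=n$. The integer $e_{a,\alpha}$ equals $\frac{n\alpha+al-n\lfloor al/n\rfloor}{\gcd(n,l)}$. *)

theory Defs
  imports Complex_Main "HOL-Number_Theory.Cong"
begin

definition orbitK :: "int \<Rightarrow> int \<Rightarrow> int \<Rightarrow> int set" where
  "orbitK n k a = {(a * k ^ i) mod n | i :: nat. True}"

definition orbit_reps :: "int \<Rightarrow> int \<Rightarrow> int set \<Rightarrow> bool" where
  "orbit_reps n k I \<longleftrightarrow> (\<forall>u :: int. \<exists>!a. a \<in> I \<and> orbitK n k a = orbitK n k u)"

definition S_count :: "int \<Rightarrow> int \<Rightarrow> int \<Rightarrow> int \<Rightarrow> int \<Rightarrow> nat" where
  "S_count n k a b c = card {(r, s). r \<in> orbitK n k a \<and> s \<in> orbitK n k b \<and> [r + s = c] (mod n)}"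

definition e_val :: "int \<Rightarrow> int \<Rightarrow> int \<Rightarrow> int \<Rightarrow> int" where
  "e_val n l a \<alpha> = (n * \<alpha> + a * l - n * \<lfloor>real_of_int (a * l) / real_of_int n\<rfloor>) div gcd n l"

end

theory Submission
  imports Defs
begin

text \<open>Since l k = l modulo n, multiplication by l cannot tell apart the points of an orbit of
  u \<mapsto> k u. Hence a pair (r, s) witnessing S(a,b,c) \<noteq> 0 gives l (a + b) = l c modulo n.
  Writing n = g N and l = g L with g = gcd n l, the value e_{a,\<alpha>} is N \<alpha> + (a L mod N),
  so e_{a,\<alpha>} + e_{b,\<beta>} - e_{c,\<gamma>} = L (a + b - c) modulo N, and this vanishes because
  n divides l (a + b - c). Only n > 0, l (k - 1) = 0 mod n and S(a,b,c) \<noteq> 0 are needed.\<close>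

lemma cong_mult_power_eq:
  fixes l k n :: int
  assumes "[l * k = l] (mod n)"
  shows "[l * k ^ i = l] (mod n)"
proof (induction i)
  case 0
  show ?case by simp
next
  case (Suc i)
  have "[l * k * k ^ i = l * k ^ i] (mod n)"
    using assms by (rule cong_scalar_right)
  then show ?case
    using Suc.IH by (simp add: mult.assoc cong_trans)
qed

lemma orbitK_cong_mult:
  fixes l k n :: int
  assumes "[l * (k - 1) = 0] (mod n)" and "r \<in> orbitK n k a"
  shows "[l * r = l * a] (mod n)"
proof -
  obtain i where r: "r = (a * k ^ i) mod n"
    using assms(2) unfolding orbitK_def by auto
  have "[l * k = l] (mod n)"
    using assms(1) by (simp add: cong_iff_dvd_diff algebra_simps)
  then have "[a * (l * k ^ i) = a * l] (mod n)"
    by (intro cong_scalar_left cong_mult_power_eq)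
  then show ?thesis
    unfolding r by (simp add: cong_def mod_mult_right_eq mult.commute mult.left_commute)
qed

lemma S_count_nonzero_imp_cong_mult:
  fixes l k n :: int
  assumes "[l * (k - 1) = 0] (mod n)" and "S_count n k a b c \<noteq> 0"
  shows "[l * (a + b) = l * c] (mod n)"
proof -
  have "{(r, s). r \<in> orbitK n k a \<and> s \<in> orbitK n k b \<and> [r + s = c] (mod n)} \<noteq> {}"
    using assms(2) unfolding S_count_def by (metis card.empty)
  then obtain r s where rs: "r \<in> orbitK n k a" "s \<in> orbitK n k b" "[r + s = c] (mod n)"
    by blast
  have "[l * a + l * b = l * r + l * s] (mod n)"
    using orbitK_cong_mult[OF assms(1)] rs(1,2) by (intro cong_add) (auto simp: cong_sym)
  also have "[l * r + l * s = l * c] (mod n)"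
    using rs(3) cong_scalar_left[of "r + s" c n l] by (simp add: distrib_left)
  finally show ?thesis by (simp add: distrib_left)
qed

lemma cong_mult_div_gcd:
  fixes l n x y :: int
  assumes "[l * x = l * y] (mod n)"
  shows "[(l div gcd n l) * x = (l div gcd n l) * y] (mod (n div gcd n l))"
proof (cases "gcd n l = 0")
  case True
  then show ?thesis by simp
next
  case False
  define g where "g = gcd n l"
  have "n dvd l * (x - y)"
    using assms by (simp add: cong_iff_dvd_diff right_diff_distrib)
  moreover have "n = g * (n div g)" and "l = g * (l div g)"
    by (simp_all add: g_def)
  ultimately have "g * (n div g) dvd g * ((l div g) * (x - y))"
    by (metis mult.assoc)
  then have "n div g dvd (l div g) * (x - y)"
    using False dvd_times_left_cancel_iff g_def by blast
  then show ?thesis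
    by (simp add: g_def cong_iff_dvd_diff right_diff_distrib)
qed

lemma e_val_eq:
  fixes n l a x :: int
  assumes "n > 0"
  shows "e_val n l a x = (n div gcd n l) * x + (a * (l div gcd n l)) mod (n div gcd n l)"
proof -
  define g N L where "g = gcd n l" and "N = n div g" and "L = l div g"
  have g_pos: "g > 0" using assms by (simp add: g_def)
  have n_eq: "n = g * N" and l_eq: "l = g * L"
    by (simp_all add: g_def N_def L_def)
  have "e_val n l a x = (n * x + (a * l) mod n) div g"
    unfolding e_val_def g_def [symmetric] floor_divide_of_int_eq
    by (metis add_diff_eq minus_mult_div_eq_mod)
  also have "(a * l) mod n = g * ((a * L) mod N)"
    unfolding n_eq l_eq using mod_mult_mult1[of g "a * L" N] by (simp add: mult.left_commute)
  also have "n * x + g * ((a * L) mod N) = g * (N * x + (a * L) mod N)"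
    unfolding n_eq by (simp add: algebra_simps)
  finally show ?thesis
    using g_pos by (simp add: g_def N_def L_def)
qed

lemma e_val_cong:
  fixes n l a x :: int
  assumes "n > 0"
  shows "[e_val n l a x = (l div gcd n l) * a] (mod (n div gcd n l))"
  unfolding e_val_eq[OF assms] by (simp add: cong_def mult.commute)

theorem mainTheorem1:
  fixes n k l :: int and m :: nat and I :: "int set" and a b c \<alpha> \<beta> \<gamma> :: int
  assumes "n > 0" and "m > 0"
    and "gcd n k = 1" and "[k ^ m = 1] (mod n)" and "[l * (k - 1) = 0] (mod n)"
    and "orbit_reps n k I"
    and "a \<in> I" and "b \<in> I" and "c \<in> I"
    and "S_count n k a b c \<noteq> 0"
    and "0 \<le> \<alpha>" and "\<alpha> < int (card (orbitK n k c))"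
    and "0 \<le> \<beta>" and "\<beta> < int (card (orbitK n k b))"
    and "0 \<le> \<gamma>" and "\<gamma> < int (card (orbitK n k c))"
  shows "[e_val n l a \<alpha> + e_val n l b \<beta> - e_val n l c \<gamma> = 0] (mod (n div gcd n l))"
proof -
  let ?N = "n div gcd n l" and ?L = "l div gcd n l"
  have "[e_val n l a \<alpha> + e_val n l b \<beta> - e_val n l c \<gamma> = ?L * a + ?L * b - ?L * c] (mod ?N)"
    using e_val_cong[OF assms(1)] by (intro cong_diff cong_add)
  also have "[?L * a + ?L * b - ?L * c = 0] (mod ?N)"
    using cong_mult_div_gcd[OF S_count_nonzero_imp_cong_mult[OF assms(5,10)]]
    by (simp add: cong_iff_dvd_diff distrib_left)
  finally show ?thesis .
qed

end
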